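(* Let $p>1$ be an integer and let $u^{(p)}$ be the fixed point of the substitution $\varphi_p(L)=L^pS$, $\varphi_p(S)=M$, $\varphi_p(M)=L^{p-1}S$. If $Sz'S$ is a factor of $u^{(p)}$ with $|z'|_S=0$, then $z'=L^p$, or $z'=ML^p$, or $z'=ML^{p-1}$.
   Context: $u^{(p)}=\lim_{n\to\infty}\varphi_p^n(L)$. A factor is a finite contiguous subword; $|w|_a$ is the number of occurrences of the letter $a$ in $w$; $L^k$ denotes $k$ concatenated copies of $L$. *)

theory Defs
  imports Main
begin

datatype letter = L | S | M

fun phi :: "nat \<Rightarrow> letter \<Rightarrow> letter list" where
  "phi p L = replicate p L @ [S]"
| "phi p S = [M]"
| "phi p M = replicate (p - 1) L @ [S]"

definition phi_word :: "nat \<Rightarrow> letter list \<Rightarrow> letter list" where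
  "phi_word p w = concat (map (phi p) w)"

text \<open>The fixed point u^(p) = lim phi_p^n(L), as an infinite word nat => letter.
  Since phi_p(L) begins with L, each phi_p^n(L) is a prefix of phi_p^(n+1)(L), and
  (for p > 1) phi_p^(i+1)(L) has length > i, so its i-th letter is the i-th letter
  of the limit.\<close>
definition u :: "nat \<Rightarrow> nat \<Rightarrow> letter" where
  "u p i = ((phi_word p ^^ Suc i) [L]) ! i"

definition factor :: "letter list \<Rightarrow> (nat \<Rightarrow> letter) \<Rightarrow> bool" where
  "factor w x \<longleftrightarrow> (\<exists>i. w = map x [i..<i + length w])"

end

theory Submission
  imports Defs
begin

text \<open>For \<open>c \<noteq> S\<close> the image \<open>\<phi>(c)\<close> is a block of \<open>L\<close>'s closed by its only \<open>S\<close>, while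
  \<open>\<phi>(S) = M\<close> contains no \<open>S\<close>. So the word strictly between two consecutive \<open>S\<close> in \<open>\<phi>(w)\<close>
  is the image of the letters of \<open>w\<close> following a non-\<open>S\<close> letter up to the next non-\<open>S\<close>
  letter, with the final \<open>S\<close> removed. In every iterate \<open>\<phi>\<^sup>n(L)\<close> an \<open>S\<close> is never followed
  by \<open>S\<close> and an \<open>M\<close> is always preceded by \<open>S\<close>, since \<open>\<phi>\<close> preserves these constraints
  on adjacent letters. Hence a non-\<open>S\<close> letter is followed either by \<open>L\<close>, giving \<open>L\<^sup>p\<close>,
  or by \<open>S\<close> and then \<open>L\<close> or \<open>M\<close>, giving \<open>ML\<^sup>p\<close> or \<open>ML\<^sup>p\<^sup>-\<^sup>1\<close>.\<close>

definition admissible_pair :: "letter \<Rightarrow> letter \<Rightarrow> bool" where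
  "admissible_pair a b \<longleftrightarrow> (a = S \<longrightarrow> b \<noteq> S) \<and> (b = M \<longrightarrow> a = S)"

definition S_return_words :: "nat \<Rightarrow> letter list set" where
  "S_return_words p = {replicate p L, M # replicate p L, M # replicate (p - 1) L}"

abbreviation phi_iterate :: "nat \<Rightarrow> nat \<Rightarrow> letter list" where
  "phi_iterate p n \<equiv> (phi_word p ^^ n) [L]"

lemma phi_word_Nil [simp]: "phi_word p [] = []"
  by (simp add: phi_word_def)

lemma phi_word_Cons [simp]: "phi_word p (c # w) = phi p c @ phi_word p w"
  by (simp add: phi_word_def)

lemma phi_word_append [simp]: "phi_word p (xs @ ys) = phi_word p xs @ phi_word p ys"
  by (simp add: phi_word_def)

lemma phi_non_S: "c \<noteq> S \<Longrightarrow> \<exists>r. phi p c = r @ [S] \<and> S \<notin> set r"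
  by (cases c) auto

lemma append_Cons_first_occurrence_eq:
  "x \<notin> set xs \<Longrightarrow> x \<notin> set ys \<Longrightarrow> xs @ x # zs = ys @ x # zs' \<Longrightarrow> xs = ys \<and> zs = zs'"
proof (induction xs arbitrary: ys)
  case Nil then show ?case by (cases ys) auto
next
  case (Cons a xs) then show ?case by (cases ys) auto
qed

lemma successively_admissible_replicate_L_S: "successively admissible_pair (replicate n L @ [S])"
proof (induction n)
  case (Suc n) then show ?case by (cases n) (auto simp: admissible_pair_def)
qed simp

lemma successively_admissible_phi: "successively admissible_pair (phi p c)"
  by (cases c) (auto simp: successively_admissible_replicate_L_S)

lemma successively_admissible_phi_word:
  assumes "p > 0" and "successively admissible_pair w"
  shows "successively admissible_pair (phi_word p w)"
  using assms(2)
proof (induction w)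
  case (Cons c w)
  have "admissible_pair (last (phi p c)) (hd (phi_word p w))" if "w = d # w'" for d w'
    using Cons.prems \<open>p > 0\<close> that
    by (cases c; cases d) (auto simp: admissible_pair_def hd_append gr0_conv_Suc)
  with Cons show ?case
    by (cases w) (auto simp: successively_append_iff successively_admissible_phi successively_Cons)
qed simp

lemma successively_admissible_phi_iterate:
  "p > 0 \<Longrightarrow> successively admissible_pair (phi_iterate p n)"
  by (induction n) (auto simp: successively_admissible_phi_word)

lemma return_word_after_non_S:
  assumes adm: "successively admissible_pair (c # w)" and "c \<noteq> S"
    and w: "phi_word p w = z @ S # b" and "S \<notin> set z"
  shows "z \<in> S_return_words p"
proof (cases w)
  case (Cons d w')
  have "d \<noteq> M" using adm \<open>c \<noteq> S\<close> Cons by (simp add: admissible_pair_def)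
  consider "d = L" | "d = S" by (cases d) (use \<open>d \<noteq> M\<close> in auto)
  then show ?thesis
  proof cases
    case 1
    then have "z @ S # b = replicate p L @ S # phi_word p w'" using w Cons by simp
    then show ?thesis
      using append_Cons_first_occurrence_eq[of S z "replicate p L"] \<open>S \<notin> set z\<close>
      by (auto simp: S_return_words_def)
  next
    case 2
    then have zb: "z @ S # b = M # phi_word p w'" using w Cons by simp
    then obtain z' where z: "z = M # z'" by (cases z) auto
    with zb have w': "phi_word p w' = z' @ S # b" by simp
    then obtain e w'' where e: "w' = e # w''" by (cases w') auto
    have "e \<noteq> S" using adm Cons e \<open>d = S\<close> by (simp add: admissible_pair_def)
    then obtain r where r: "phi p e = r @ [S]" "S \<notin> set r" using phi_non_S by blast
    moreover have "z' @ S # b = r @ S # phi_word p w''" using w' e r by simp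
    moreover have "S \<notin> set z'" using \<open>S \<notin> set z\<close> z by simp
    ultimately have "z' = r" using append_Cons_first_occurrence_eq[of S z' r] by simp
    with r \<open>e \<noteq> S\<close> z show ?thesis by (cases e) (auto simp: S_return_words_def)
  qed
qed (use w in simp)

lemma return_word_in_phi_word:
  assumes "successively admissible_pair w"
    and "phi_word p w = a @ S # z @ S # b" and "S \<notin> set z"
  shows "z \<in> S_return_words p"
  using assms
proof (induction w arbitrary: a)
  case (Cons c w)
  have adm_w: "successively admissible_pair w"
    using Cons.prems(1) by (cases w) auto
  show ?case
  proof (cases "c = S")
    case True
    then obtain a' where "a = M # a'" "phi_word p w = a' @ S # z @ S # b"
      using Cons.prems(2) by (cases a) auto
    then show ?thesis using Cons.IH adm_w \<open>S \<notin> set z\<close> by blast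
  next
    case False
    then obtain r where r: "phi p c = r @ [S]" "S \<notin> set r" using phi_non_S by blast
    then have eq: "r @ S # phi_word p w = a @ S # z @ S # b" using Cons.prems(2) by simp
    show ?thesis
    proof (cases "S \<in> set a")
      case True
      then obtain a1 a2 where "a = a1 @ S # a2" "S \<notin> set a1" by (meson split_list_first)
      then have "phi_word p w = a2 @ S # z @ S # b"
        using eq r append_Cons_first_occurrence_eq[of S r a1] by auto
      then show ?thesis using Cons.IH adm_w \<open>S \<notin> set z\<close> by blast
    next
      case False
      then have "phi_word p w = z @ S # b"
        using eq r append_Cons_first_occurrence_eq[of S r a] by auto
      then show ?thesis
        using return_word_after_non_S Cons.prems(1) \<open>c \<noteq> S\<close> \<open>S \<notin> set z\<close> by blast
    qed
  qed
qed simp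

lemma phi_iterate_Cons_L: "p > 0 \<Longrightarrow> \<exists>r. phi_iterate p n = L # r"
proof (induction n)
  case (Suc n)
  then obtain r where "phi_iterate p n = L # r" by blast
  with Suc.prems show ?case by (cases p) auto
qed simp

lemma length_phi_word_ge:
  "p > 0 \<Longrightarrow> length (phi_word p w) \<ge> length w + count_list w L"
proof (induction w)
  case (Cons c w) then show ?case by (cases c) auto
qed simp

lemma length_phi_iterate: "p > 0 \<Longrightarrow> length (phi_iterate p n) > n"
proof (induction n)
  case (Suc n)
  obtain r where "phi_iterate p n = L # r" using phi_iterate_Cons_L Suc.prems by fastforce
  then have "length (phi_iterate p (Suc n)) > length (phi_iterate p n)"
    using length_phi_word_ge[OF Suc.prems, of "phi_iterate p n"] by simp
  with Suc show ?case by simp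
qed simp

lemma phi_iterate_prefix: "p > 0 \<Longrightarrow> \<exists>r. phi_iterate p (Suc n) = phi_iterate p n @ r"
proof (induction n)
  case 0 then show ?case by (cases p) auto
next
  case (Suc n)
  then obtain r where "phi_iterate p (Suc n) = phi_iterate p n @ r" by blast
  then have "phi_iterate p (Suc (Suc n)) = phi_iterate p (Suc n) @ phi_word p r" by simp
  then show ?case by blast
qed

lemma phi_iterate_prefix_le:
  assumes "p > 0" and "m \<le> n"
  shows "\<exists>r. phi_iterate p n = phi_iterate p m @ r"
  using assms(2)
proof (induction n rule: dec_induct)
  case (step n)
  then obtain r where "phi_iterate p n = phi_iterate p m @ r" by blast
  moreover obtain r' where "phi_iterate p (Suc n) = phi_iterate p n @ r'"
    using phi_iterate_prefix assms(1) by blast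
  ultimately show ?case by auto
qed simp

lemma u_eq_nth_phi_iterate:
  assumes p: "p > 0" and "k < n"
  shows "u p k = phi_iterate p n ! k"
proof -
  obtain r where "phi_iterate p n = phi_iterate p (Suc k) @ r"
    using phi_iterate_prefix_le[of p "Suc k" n] assms by auto
  with length_phi_iterate[OF p, of "Suc k"] show ?thesis by (simp add: u_def nth_append)
qed

lemma factor_u_in_phi_iterate:
  assumes p: "p > 0" and "factor w (u p)"
  shows "\<exists>n a b. phi_iterate p (Suc n) = a @ w @ b"
proof -
  define l where "l = length w" \<comment> \<open>keeps \<open>wi\<close> below from being a looping rewrite rule\<close>
  obtain i where wi: "w = map (u p) [i..<i + l]"
    using assms(2) unfolding factor_def l_def by blast
  define X where "X = phi_iterate p (Suc (i + l))"
  have len_X: "length X > i + l" using length_phi_iterate[OF p, of "Suc (i + l)"] X_def by simp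
  have "w = take l (drop i X)"
  proof (rule nth_equalityI)
    fix k assume "k < length w"
    then have "k < l" by (simp add: l_def)
    then have "w ! k = u p (i + k)" using wi by simp
    also have "\<dots> = X ! (i + k)"
      unfolding X_def by (rule u_eq_nth_phi_iterate[OF p]) (use \<open>k < l\<close> in simp)
    finally show "w ! k = take l (drop i X) ! k" using \<open>k < l\<close> len_X by simp
  qed (use len_X l_def in simp)
  then have "X = take i X @ w @ drop l (drop i X)" by (simp only: append_take_drop_id)
  then show ?thesis using X_def by blast
qed

theorem mainTheorem4:
  fixes p :: nat and z' :: "letter list"
  assumes "p > 1"
    and "factor ([S] @ z' @ [S]) (u p)"
    and "count_list z' S = 0"
  shows "z' = replicate p L \<or> z' = [M] @ replicate p L \<or> z' = [M] @ replicate (p - 1) L"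
proof -
  have p: "p > 0" using assms(1) by simp
  obtain n a b where "phi_word p (phi_iterate p n) = a @ S # z' @ S # b"
    using factor_u_in_phi_iterate[OF p assms(2)] by auto
  moreover have "S \<notin> set z'" using assms(3) by (simp add: count_list_0_iff)
  ultimately have "z' \<in> S_return_words p"
    by (rule return_word_in_phi_word[OF successively_admissible_phi_iterate[OF p]])
  then show ?thesis by (auto simp: S_return_words_def)
qed

end
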